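(* If a pattern $\mathcal P$ is the union of a set row bounded by $n$ and a set column bounded by $m$, then $\mathcal P$ is Schur bounded with $\mathfrak s(\mathcal P)\le\sqrt n+\sqrt m$. Likewise, if $A=B+C$ where $B,C$ are nonnegative matrices, $B$ row bounded by $L$ and $C$ column bounded by $M$, then $\mathfrak s(\mathcal S(A))\le L+M$.
   Context: For a matrix $S=[s_{ij}]$, the Schur multiplier acts on bounded operators $T=[t_{ij}]$ on $\ell^2$ by $T\mapsto[s_{ij}t_{ij}]$, with norm $\|S\|_m$. For a pattern $\mathcal P\subseteq\mathbb N\times\mathbb N$, $\mathcal S(\mathcal P)$ is the set of matrices supported on $\mathcal P$ with entries of modulus at most $1$; $\mathfrak s(\mathcal P)=\sup_{X\in\mathcal S(\mathcal P)}\|X\|_m$, and $\mathcal P$ is Schur bounded if every element of $\mathcal S(\mathcal P)$ is a bounded Schur multiplier. For a nonnegative matrix $A$, $\mathcal S(A)=\{S:|s_{ij}|\le a_{ij}\}$ and $\mathfrak s(\mathcal S(A))=\sup_{S\in\mathcal S(A)}\|S\|_m$. A pattern is row bounded by $n$ if each row contains at most $n$ of its elements (column bounded similarly). A nonnegative matrix is row bounded by $L$ if $\sup_i\sum_j a_{ij}^2\le L^2$ (column bounded similarly). *)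

theory Defs
  imports Complex_Main "HOL-Library.Extended_Real"
begin

text \<open>The operator norm on l2 of a matrix is the supremum of the finite sections of its
  bilinear form over unit vectors; it is infinite iff the matrix does not define
  a bounded operator on l2.\<close>

type_synonym cmat = "nat \<Rightarrow> nat \<Rightarrow> complex"

definition op_norm :: "cmat \<Rightarrow> ereal" where
  "op_norm T = (SUP (I, J, x, y) \<in> {(I, J, x, y). finite I \<and> finite J \<and>
       (\<Sum>j\<in>J. (cmod (x j))\<^sup>2) \<le> 1 \<and> (\<Sum>i\<in>I. (cmod (y i))\<^sup>2) \<le> 1}.
       ereal (cmod (\<Sum>i\<in>I. \<Sum>j\<in>J. cnj (y i) * T i j * x j)))"

definition bounded_op :: "cmat \<Rightarrow> bool" where
  "bounded_op T \<longleftrightarrow> op_norm T < \<infinity>"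

definition schur_prod :: "cmat \<Rightarrow> cmat \<Rightarrow> cmat" where
  "schur_prod S T = (\<lambda>i j. S i j * T i j)"

definition schur_multiplier :: "cmat \<Rightarrow> bool" where
  "schur_multiplier S \<longleftrightarrow> (\<forall>T. bounded_op T \<longrightarrow> bounded_op (schur_prod S T))"

definition mult_norm :: "cmat \<Rightarrow> ereal" where
  "mult_norm S = (SUP T \<in> {T. op_norm T \<le> 1}. op_norm (schur_prod S T))"

definition pattern_mats :: "(nat \<times> nat) set \<Rightarrow> cmat set" where
  "pattern_mats P = {X. (\<forall>i j. (i, j) \<notin> P \<longrightarrow> X i j = 0) \<and> (\<forall>i j. cmod (X i j) \<le> 1)}"

definition schur_bounded :: "(nat \<times> nat) set \<Rightarrow> bool" where
  "schur_bounded P \<longleftrightarrow> (\<forall>X \<in> pattern_mats P. schur_multiplier X)"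

definition pattern_schur_const :: "(nat \<times> nat) set \<Rightarrow> ereal" where
  "pattern_schur_const P = (SUP X \<in> pattern_mats P. mult_norm X)"

definition pattern_row_bounded :: "(nat \<times> nat) set \<Rightarrow> nat \<Rightarrow> bool" where
  "pattern_row_bounded P n \<longleftrightarrow> (\<forall>i. finite {j. (i, j) \<in> P} \<and> card {j. (i, j) \<in> P} \<le> n)"

definition pattern_col_bounded :: "(nat \<times> nat) set \<Rightarrow> nat \<Rightarrow> bool" where
  "pattern_col_bounded P m \<longleftrightarrow> (\<forall>j. finite {i. (i, j) \<in> P} \<and> card {i. (i, j) \<in> P} \<le> m)"

definition dominated_mats :: "(nat \<Rightarrow> nat \<Rightarrow> real) \<Rightarrow> cmat set" where
  "dominated_mats A = {S. \<forall>i j. cmod (S i j) \<le> A i j}"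

definition mat_schur_const :: "(nat \<Rightarrow> nat \<Rightarrow> real) \<Rightarrow> ereal" where
  "mat_schur_const A = (SUP S \<in> dominated_mats A. mult_norm S)"

definition nonneg_mat :: "(nat \<Rightarrow> nat \<Rightarrow> real) \<Rightarrow> bool" where
  "nonneg_mat A \<longleftrightarrow> (\<forall>i j. 0 \<le> A i j)"

definition mat_row_bounded :: "(nat \<Rightarrow> nat \<Rightarrow> real) \<Rightarrow> real \<Rightarrow> bool" where
  "mat_row_bounded B L \<longleftrightarrow> 0 \<le> L \<and>
     (\<forall>i. summable (\<lambda>j. (B i j)\<^sup>2) \<and> (\<Sum>j. (B i j)\<^sup>2) \<le> L\<^sup>2)"

definition mat_col_bounded :: "(nat \<Rightarrow> nat \<Rightarrow> real) \<Rightarrow> real \<Rightarrow> bool" where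
  "mat_col_bounded C M \<longleftrightarrow> 0 \<le> M \<and>
     (\<forall>j. summable (\<lambda>i. (C i j)\<^sup>2) \<and> (\<Sum>i. (C i j)\<^sup>2) \<le> M\<^sup>2)"

end

(* Split every entry proportionally, s_ij = s'_ij + s''_ij with |s'_ij| <= b_ij and
   |s''_ij| <= c_ij; since the operator norm is subadditive, it suffices to treat
   the two parts separately.  For the row bounded part, the form <(S' o T) x, y> is the sum
   over columns k of <T (x_k e_k), w_k> with w_k i = y_i conj(s'_ik), so by Cauchy-Schwarz
   it is at most |T| |x| (sum_k |w_k|^2)^(1/2) <= L |T| |x| |y|.  The column bounded part
   is the row bounded part for the adjoints.  A pattern R u C is handled by dominating its
   matrices by the sum of the indicator matrices of R and C, whose rows, respectively
   columns, have l2-norm at most sqrt n, respectively sqrt m. *)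

theory Submission
  imports Defs "HOL-Analysis.L2_Norm"
begin

definition sesq_form :: "cmat \<Rightarrow> nat set \<Rightarrow> nat set \<Rightarrow> (nat \<Rightarrow> complex) \<Rightarrow> (nat \<Rightarrow> complex) \<Rightarrow> complex"
  where "sesq_form T I J x y = (\<Sum>i\<in>I. \<Sum>j\<in>J. cnj (y i) * T i j * x j)"

abbreviation norm_on :: "nat set \<Rightarrow> (nat \<Rightarrow> complex) \<Rightarrow> real"
  where "norm_on J x \<equiv> L2_set (\<lambda>j. cmod (x j)) J"

lemma op_norm_le_iff:
  "op_norm T \<le> z \<longleftrightarrow> (\<forall>I J x y. finite I \<longrightarrow> finite J \<longrightarrow> norm_on J x \<le> 1 \<longrightarrow> norm_on I y \<le> 1 \<longrightarrow>
     ereal (cmod (sesq_form T I J x y)) \<le> z)"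
  unfolding op_norm_def SUP_le_iff sesq_form_def L2_set_def by auto

lemma norm_sesq_form_le_op_norm:
  assumes "finite I" "finite J" "norm_on J x \<le> 1" "norm_on I y \<le> 1"
  shows "ereal (cmod (sesq_form T I J x y)) \<le> op_norm T"
  using assms op_norm_le_iff[of T "op_norm T"] by blast

lemma op_norm_nonneg: "0 \<le> op_norm T"
  using norm_sesq_form_le_op_norm[of "{}" "{}" x y T for x y] by (simp add: sesq_form_def zero_ereal_def)

lemma sesq_form_scale:
  "sesq_form T I J (\<lambda>j. a * x j) (\<lambda>i. b * y i) = cnj b * a * sesq_form T I J x y"
  unfolding sesq_form_def by (simp add: sum_distrib_left mult_ac)

lemma norm_on_scale: "norm_on J (\<lambda>j. of_real r * x j) = \<bar>r\<bar> * norm_on J x"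
  by (simp add: L2_set_right_distrib norm_mult)

lemma norm_sesq_form_le:
  assumes T: "op_norm T \<le> ereal c" and "finite I" "finite J"
  shows "cmod (sesq_form T I J x y) \<le> c * norm_on J x * norm_on I y"
proof (cases "norm_on J x = 0 \<or> norm_on I y = 0")
  case True
  then have "sesq_form T I J x y = 0"
    using assms(2,3) by (auto simp: L2_set_eq_0_iff sesq_form_def)
  moreover have "0 \<le> c" using order.trans[OF op_norm_nonneg T] by simp
  ultimately show ?thesis by simp
next
  case False
  define a b where "a = 1 / norm_on J x" and "b = 1 / norm_on I y"
  have pos: "0 < norm_on J x" "0 < norm_on I y"
    using False L2_set_nonneg by (metis order_le_less)+
  have "norm_on J (\<lambda>j. of_real a * x j) = 1" "norm_on I (\<lambda>i. of_real b * y i) = 1"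
    using pos by (simp_all only: norm_on_scale) (simp_all add: a_def b_def)
  then have "ereal (cmod (sesq_form T I J (\<lambda>j. of_real a * x j) (\<lambda>i. of_real b * y i))) \<le> ereal c"
    by (intro order.trans[OF _ T] norm_sesq_form_le_op_norm[OF assms(2,3)]) simp_all
  then have "cmod (cnj (of_real b) * of_real a * sesq_form T I J x y) \<le> c"
    by (simp only: sesq_form_scale ereal_less_eq)
  moreover have "0 < a" "0 < b"
    using pos by (simp_all add: a_def b_def)
  ultimately have "b * a * cmod (sesq_form T I J x y) \<le> c"
    by (simp only: norm_mult complex_mod_cnj norm_of_real abs_of_pos)
  then show ?thesis
    using pos by (simp add: a_def b_def field_simps)
qed

lemma op_norm_leI:
  assumes "0 \<le> c"
    and "\<And>I J x y. finite I \<Longrightarrow> finite J \<Longrightarrow> cmod (sesq_form T I J x y) \<le> c * norm_on J x * norm_on I y"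
  shows "op_norm T \<le> ereal c"
  unfolding op_norm_le_iff
proof (intro allI impI)
  fix I J x y
  assume "finite I" "finite J" "norm_on J x \<le> 1" "norm_on I y \<le> 1"
  then have "cmod (sesq_form T I J x y) \<le> c * (norm_on J x * norm_on I y)"
    using assms(2) by (simp add: mult.assoc)
  also have "\<dots> \<le> c"
    using \<open>norm_on J x \<le> 1\<close> \<open>norm_on I y \<le> 1\<close> assms(1) by (simp add: mult_left_le mult_le_one)
  finally show "ereal (cmod (sesq_form T I J x y)) \<le> ereal c" by simp
qed

lemma op_norm_add_le: "op_norm (\<lambda>i j. A i j + B i j) \<le> op_norm A + op_norm B"
  unfolding op_norm_le_iff
proof (intro allI impI)
  fix I J x y
  assume "finite I" "finite J" "norm_on J x \<le> 1" "norm_on I y \<le> 1"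
  have "sesq_form (\<lambda>i j. A i j + B i j) I J x y = sesq_form A I J x y + sesq_form B I J x y"
    by (simp add: sesq_form_def algebra_simps sum.distrib)
  then have "ereal (cmod (sesq_form (\<lambda>i j. A i j + B i j) I J x y))
      \<le> ereal (cmod (sesq_form A I J x y)) + ereal (cmod (sesq_form B I J x y))"
    by (simp add: norm_triangle_ineq)
  also have "\<dots> \<le> op_norm A + op_norm B"
    by (intro add_mono norm_sesq_form_le_op_norm) fact+
  finally show "ereal (cmod (sesq_form (\<lambda>i j. A i j + B i j) I J x y)) \<le> op_norm A + op_norm B" .
qed

definition adjoint :: "cmat \<Rightarrow> cmat"
  where "adjoint T = (\<lambda>i j. cnj (T j i))"

lemma adjoint_adjoint [simp]: "adjoint (adjoint T) = T"
  by (simp add: adjoint_def)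

lemma adjoint_schur_prod: "adjoint (schur_prod S T) = schur_prod (adjoint S) (adjoint T)"
  by (simp add: adjoint_def schur_prod_def)

lemma sesq_form_adjoint: "sesq_form (adjoint T) J I y x = cnj (sesq_form T I J x y)"
  unfolding sesq_form_def adjoint_def by (simp add: sum.swap[of _ J] mult_ac)

lemma op_norm_adjoint_le: "op_norm (adjoint T) \<le> op_norm T"
  unfolding op_norm_le_iff
  by (metis sesq_form_adjoint norm_sesq_form_le_op_norm complex_mod_cnj adjoint_adjoint)

lemma L2_set_commute:
  "L2_set (\<lambda>j. L2_set (\<lambda>i. f i j) I) J = L2_set (\<lambda>i. L2_set (\<lambda>j. f i j) J) I"
  unfolding L2_set_def by (simp add: sum_nonneg sum.swap[of _ J])

lemma op_norm_schur_prod_le_row: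
  assumes T: "op_norm T \<le> ereal c"
    and rows: "\<And>i J. finite J \<Longrightarrow> L2_set (\<lambda>j. cmod (S i j)) J \<le> L"
  shows "op_norm (schur_prod S T) \<le> ereal (L * c)"
proof -
  have "0 \<le> L" using rows[of "{}"] by simp
  have "0 \<le> c" using order.trans[OF op_norm_nonneg T] by simp
  have "cmod (sesq_form (schur_prod S T) I J x y) \<le> L * c * norm_on J x * norm_on I y"
    if fin: "finite I" "finite J" for I J x y
  proof -
    define w where "w k i = y i * cnj (S i k)" for k i
    have "L2_set (\<lambda>k. norm_on I (w k)) J = L2_set (\<lambda>i. cmod (y i) * L2_set (\<lambda>k. cmod (S i k)) J) I"
      unfolding L2_set_commute[of _ I J] w_def by (simp add: norm_mult L2_set_right_distrib)
    also have "\<dots> \<le> L2_set (\<lambda>i. cmod (y i) * L) I"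
      by (intro L2_set_mono mult_left_mono rows fin) simp_all
    also have "\<dots> = L * norm_on I y"
      using \<open>0 \<le> L\<close> by (simp add: L2_set_left_distrib[symmetric])
    finally have w_norms: "L2_set (\<lambda>k. norm_on I (w k)) J \<le> L * norm_on I y" .
    have "sesq_form (schur_prod S T) I J x y = (\<Sum>k\<in>J. sesq_form T I {k} (\<lambda>_. x k) (w k))"
      unfolding sesq_form_def schur_prod_def w_def by (simp add: mult_ac sum.swap[of _ I J])
    then have "cmod (sesq_form (schur_prod S T) I J x y)
        \<le> (\<Sum>k\<in>J. cmod (sesq_form T I {k} (\<lambda>_. x k) (w k)))"
      by (simp add: norm_sum)
    also have "\<dots> \<le> c * (\<Sum>k\<in>J. cmod (x k) * norm_on I (w k))"
      unfolding sum_distrib_left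
      by (intro sum_mono order.trans[OF norm_sesq_form_le[OF T fin(1)]]) simp_all
    also have "\<dots> \<le> c * (norm_on J x * L2_set (\<lambda>k. norm_on I (w k)) J)"
      using L2_set_mult_ineq[of "\<lambda>k. cmod (x k)" "\<lambda>k. norm_on I (w k)" J] \<open>0 \<le> c\<close>
      by (simp add: mult_left_mono)
    also have "\<dots> \<le> c * (norm_on J x * (L * norm_on I y))"
      using w_norms \<open>0 \<le> c\<close> by (simp add: mult_left_mono)
    finally show ?thesis by (simp add: mult_ac)
  qed
  with \<open>0 \<le> L\<close> \<open>0 \<le> c\<close> show ?thesis
    by (intro op_norm_leI) simp_all
qed

lemma op_norm_schur_prod_le_col:
  assumes T: "op_norm T \<le> ereal c"
    and cols: "\<And>j I. finite I \<Longrightarrow> L2_set (\<lambda>i. cmod (S i j)) I \<le> M"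
  shows "op_norm (schur_prod S T) \<le> ereal (M * c)"
proof -
  have "op_norm (schur_prod (adjoint S) (adjoint T)) \<le> ereal (M * c)"
    using order.trans[OF op_norm_adjoint_le T] cols
    by (intro op_norm_schur_prod_le_row) (simp_all add: adjoint_def)
  then have "op_norm (adjoint (schur_prod (adjoint S) (adjoint T))) \<le> ereal (M * c)"
    by (rule order.trans[OF op_norm_adjoint_le])
  then show ?thesis
    by (simp add: adjoint_schur_prod)
qed

lemma norm_le_add_split:
  fixes z :: "'a::real_normed_vector"
  assumes "norm z \<le> b + c" "0 \<le> b" "0 \<le> c"
  shows "\<exists>u v. z = u + v \<and> norm u \<le> b \<and> norm v \<le> c"
proof (cases "b + c = 0")
  case True
  with assms show ?thesis by (auto intro!: exI[of _ 0])
next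
  case False
  then have "0 < b + c" using assms by simp
  then have "z = (b / (b + c)) *\<^sub>R z + (c / (b + c)) *\<^sub>R z"
    by (simp add: scaleR_left_distrib[symmetric] add_divide_distrib[symmetric])
  moreover have "norm ((b / (b + c)) *\<^sub>R z) \<le> b" "norm ((c / (b + c)) *\<^sub>R z) \<le> c"
    using assms \<open>0 < b + c\<close> by (simp_all add: divide_le_eq mult.commute mult_left_mono)
  ultimately show ?thesis by blast
qed

lemma op_norm_schur_prod_le:
  assumes T: "op_norm T \<le> ereal c"
    and S: "\<And>i j. cmod (S i j) \<le> B i j + C i j"
    and B: "\<And>i j. 0 \<le> B i j" and C: "\<And>i j. 0 \<le> C i j"
    and rows: "\<And>i J. finite J \<Longrightarrow> L2_set (B i) J \<le> L"
    and cols: "\<And>j I. finite I \<Longrightarrow> L2_set (\<lambda>i. C i j) I \<le> M"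
  shows "op_norm (schur_prod S T) \<le> ereal ((L + M) * c)"
proof -
  obtain S1 S2 where split: "\<And>i j. S i j = S1 i j + S2 i j"
    and S1: "\<And>i j. cmod (S1 i j) \<le> B i j" and S2: "\<And>i j. cmod (S2 i j) \<le> C i j"
    using norm_le_add_split[OF S B C] by metis
  have "schur_prod S T = (\<lambda>i j. schur_prod S1 T i j + schur_prod S2 T i j)"
    by (simp add: schur_prod_def split distrib_right)
  then have "op_norm (schur_prod S T) \<le> op_norm (schur_prod S1 T) + op_norm (schur_prod S2 T)"
    by (simp add: op_norm_add_le)
  also have "\<dots> \<le> ereal (L * c) + ereal (M * c)"
  proof (rule add_mono)
    have "L2_set (\<lambda>j. cmod (S1 i j)) J \<le> L" if "finite J" for i J
      using S1 B by (intro order.trans[OF _ rows[OF that, of i]] L2_set_mono) auto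
    then show "op_norm (schur_prod S1 T) \<le> ereal (L * c)"
      by (rule op_norm_schur_prod_le_row[OF T])
    have "L2_set (\<lambda>i. cmod (S2 i j)) I \<le> M" if "finite I" for j I
      using S2 C by (intro order.trans[OF _ cols[OF that, of j]] L2_set_mono) auto
    then show "op_norm (schur_prod S2 T) \<le> ereal (M * c)"
      by (rule op_norm_schur_prod_le_col[OF T])
  qed
  finally show ?thesis by (simp add: distrib_right)
qed

lemma schur_multiplier_row_col:
  assumes S: "\<And>i j. cmod (S i j) \<le> B i j + C i j"
    and B: "\<And>i j. 0 \<le> B i j" and C: "\<And>i j. 0 \<le> C i j"
    and rows: "\<And>i J. finite J \<Longrightarrow> L2_set (B i) J \<le> L"
    and cols: "\<And>j I. finite I \<Longrightarrow> L2_set (\<lambda>i. C i j) I \<le> M"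
  shows "schur_multiplier S" and "mult_norm S \<le> ereal (L + M)"
proof -
  note bound = op_norm_schur_prod_le[OF _ S B C rows cols]
  show "schur_multiplier S"
    unfolding schur_multiplier_def bounded_op_def
  proof (intro allI impI)
    fix T assume "op_norm T < \<infinity>"
    then have "op_norm T = ereal (real_of_ereal (op_norm T))"
      using op_norm_nonneg[of T] by (cases "op_norm T") auto
    then have "op_norm (schur_prod S T) \<le> ereal ((L + M) * real_of_ereal (op_norm T))"
      by (intro bound) simp
    then show "op_norm (schur_prod S T) < \<infinity>"
      by (rule order.strict_trans1) simp
  qed
  show "mult_norm S \<le> ereal (L + M)"
    unfolding mult_norm_def using bound[of _ 1] by (auto intro!: SUP_least simp: one_ereal_def)
qed

lemma mat_schur_const_le_row_col:
  assumes "\<And>i j. 0 \<le> B i j" "\<And>i j. 0 \<le> C i j"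
    and "\<And>i J. finite J \<Longrightarrow> L2_set (B i) J \<le> L"
    and "\<And>j I. finite I \<Longrightarrow> L2_set (\<lambda>i. C i j) I \<le> M"
  shows "mat_schur_const (\<lambda>i j. B i j + C i j) \<le> ereal (L + M)"
  unfolding mat_schur_const_def
proof (rule SUP_least)
  fix S assume "S \<in> dominated_mats (\<lambda>i j. B i j + C i j)"
  then show "mult_norm S \<le> ereal (L + M)"
    by (intro schur_multiplier_row_col(2)[of S B C, OF _ assms]) (simp add: dominated_mats_def)
qed

lemma mat_row_bounded_L2_set_le:
  assumes "mat_row_bounded B L"
  shows "L2_set (B i) J \<le> L"
proof (cases "finite J")
  case True
  have "(\<Sum>j\<in>J. (B i j)\<^sup>2) \<le> (\<Sum>j. (B i j)\<^sup>2)"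
    using assms True by (intro sum_le_suminf) (auto simp: mat_row_bounded_def)
  with assms show ?thesis
    unfolding L2_set_def mat_row_bounded_def by (meson order.trans real_le_lsqrt)
qed (use assms in \<open>simp add: mat_row_bounded_def\<close>)

lemma mat_col_bounded_L2_set_le:
  assumes "mat_col_bounded C M"
  shows "L2_set (\<lambda>i. C i j) I \<le> M"
proof (cases "finite I")
  case True
  have "(\<Sum>i\<in>I. (C i j)\<^sup>2) \<le> (\<Sum>i. (C i j)\<^sup>2)"
    using assms True by (intro sum_le_suminf) (auto simp: mat_col_bounded_def)
  with assms show ?thesis
    unfolding L2_set_def mat_col_bounded_def by (meson order.trans real_le_lsqrt)
qed (use assms in \<open>simp add: mat_col_bounded_def\<close>)

lemma L2_set_of_bool_le:
  assumes "finite {j. P j}" "card {j. P j} \<le> n"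
  shows "L2_set (\<lambda>j. of_bool (P j)) J \<le> sqrt n"
proof (cases "finite J")
  case True
  have "card (J \<inter> {j. P j}) \<le> n"
    using card_mono[OF assms(1), of "J \<inter> {j. P j}"] assms(2) by auto
  with True show ?thesis
    by (simp add: L2_set_def power2_eq_square)
qed simp

lemma pattern_mats_subset_dominated:
  "pattern_mats (R \<union> C) \<subseteq> dominated_mats (\<lambda>i j. of_bool ((i, j) \<in> R) + of_bool ((i, j) \<in> C))"
proof
  fix X assume X: "X \<in> pattern_mats (R \<union> C)"
  have "cmod (X i j) \<le> of_bool ((i, j) \<in> R) + of_bool ((i, j) \<in> C)" for i j
    using X unfolding pattern_mats_def by (cases "(i, j) \<in> R \<union> C") (auto intro: order.trans[of _ 1])
  then show "X \<in> dominated_mats (\<lambda>i j. of_bool ((i, j) \<in> R) + of_bool ((i, j) \<in> C))"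
    by (simp add: dominated_mats_def)
qed

lemma pattern_union_schur_bounded:
  assumes R: "pattern_row_bounded R n" and C: "pattern_col_bounded C m"
  shows "schur_bounded (R \<union> C)" and "pattern_schur_const (R \<union> C) \<le> ereal (sqrt n + sqrt m)"
proof -
  have rows: "L2_set (\<lambda>j. of_bool ((i, j) \<in> R)) J \<le> sqrt n" for i J
    using R unfolding pattern_row_bounded_def by (intro L2_set_of_bool_le) auto
  have cols: "L2_set (\<lambda>i. of_bool ((i, j) \<in> C)) I \<le> sqrt m" for j I
    using C unfolding pattern_col_bounded_def by (intro L2_set_of_bool_le) auto
  show "schur_bounded (R \<union> C)"
    unfolding schur_bounded_def
  proof
    fix X assume "X \<in> pattern_mats (R \<union> C)"
    then have "X \<in> dominated_mats (\<lambda>i j. of_bool ((i, j) \<in> R) + of_bool ((i, j) \<in> C))"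
      using pattern_mats_subset_dominated by blast
    then show "schur_multiplier X"
      using rows cols by (intro schur_multiplier_row_col(1)) (auto simp: dominated_mats_def)
  qed
  have "pattern_schur_const (R \<union> C)
      \<le> mat_schur_const (\<lambda>i j. of_bool ((i, j) \<in> R) + of_bool ((i, j) \<in> C))"
    unfolding pattern_schur_const_def mat_schur_const_def
    by (rule SUP_subset_mono[OF pattern_mats_subset_dominated order.refl])
  also have "\<dots> \<le> ereal (sqrt n + sqrt m)"
    using rows cols by (intro mat_schur_const_le_row_col) auto
  finally show "pattern_schur_const (R \<union> C) \<le> ereal (sqrt n + sqrt m)" .
qed

theorem corollary2p6:
  shows "(\<forall>(P :: (nat \<times> nat) set) R C (n :: nat) (m :: nat).
            P = R \<union> C \<and> pattern_row_bounded R n \<and> pattern_col_bounded C m \<longrightarrow>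
            schur_bounded P \<and> pattern_schur_const P \<le> ereal (sqrt n + sqrt m))
      \<and> (\<forall>(A :: nat \<Rightarrow> nat \<Rightarrow> real) B C (L :: real) (M :: real).
            nonneg_mat B \<and> nonneg_mat C \<and> A = (\<lambda>i j. B i j + C i j) \<and>
            mat_row_bounded B L \<and> mat_col_bounded C M \<longrightarrow>
            mat_schur_const A \<le> ereal (L + M))"
proof (intro conjI allI impI; elim conjE)
  fix P R C :: "(nat \<times> nat) set" and n m :: nat
  assume "P = R \<union> C" "pattern_row_bounded R n" "pattern_col_bounded C m"
  then show "schur_bounded P" "pattern_schur_const P \<le> ereal (sqrt n + sqrt m)"
    using pattern_union_schur_bounded by auto
next
  fix A B C :: "nat \<Rightarrow> nat \<Rightarrow> real" and L M :: real
  assume "nonneg_mat B" "nonneg_mat C" "A = (\<lambda>i j. B i j + C i j)"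
    and "mat_row_bounded B L" "mat_col_bounded C M"
  then show "mat_schur_const A \<le> ereal (L + M)"
    using mat_row_bounded_L2_set_le[of B L] mat_col_bounded_L2_set_le[of C M]
    by (simp add: nonneg_mat_def mat_schur_const_le_row_col)
qed

end
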